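(* Assume the setup (S) of the context and let $\mathbb{A}$ be the sequence defined there. Then $\mathbb{A}$ is a complex.
   Context: Setup (S): $R$ is a Noetherian unique factorization domain with $1/2\in R$; $p\ge1$, $q\ge3$, $n=p+2$; $B_0=R^{q-2}$, $B_1=R^{p+q}$, $H=R^n$. On $H\oplus H^*$ let $Q(f,f')=f'(f)$ and $\beta\big((f,f'),(g,g')\big)=f'(g)+g'(f)$, which identifies $(H\oplus H^* )^*$ with $H\oplus H^*$. Let $\mathbb{B}\colon 0\to B_0^*\xrightarrow{\delta_4}B_1^*\xrightarrow{\delta_3}H\oplus H^*\xrightarrow{\delta_2}B_1\xrightarrow{\delta_1}B_0$ be an acyclic complex with $\delta_2=\delta_3^*$ and $\delta_1=\delta_4^*$ (duals taken using $\beta$). The Clifford action of $H\oplus H^*$ on $\bigwedge H$ is $(f,f')\cdot\omega=f\wedge\omega+\iota_{f'}(\omega)$, where $\iota_{f'}(e_1\wedge\cdots\wedge e_j)=\sum_i(-1)^{i-1}f'(e_i)\,e_1\wedge\cdots\widehat{e_i}\cdots\wedge e_j$. Let $s\in\bigwedge^{\mathrm{odd}}H$ (the spinor coordinates of $\mathbb{B}$) be an element such that for every prime $\mathfrak p\notin\operatorname{Supp}H_0(\mathbb{B})$, the image of $s$ generates the $R_{\mathfrak p}$-module $\{\omega\in\bigwedge H_{\mathfrak p}: x\cdot\omega=0\ \forall x\in(\operatorname{im}\delta_3)_{\mathfrak p}\}$. Let $s_1\in H$ be the degree-one component of $s$, and let $u\in B_1^*$ be any element with $\delta_3(u)=(s_1,0)$.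 Define $\mathbb{A}\colon 0\to B_0^*\oplus R\xrightarrow{d_3}B_1^*\xrightarrow{d_2}H^*\xrightarrow{d_1}R$ by $d_3(b,r)=\delta_4(b)+ru$; $d_2=\pi_{H^*}\circ\delta_3$, where $\pi_{H^*}\colon H\oplus H^*\to H^*$ is the projection (equivalently $d_2$ is the dual of $\delta_2|_H$); $d_1(f')=f'(s_1)$. Let $I=I_H=\operatorname{im}d_1$, the ideal generated by the coordinates of $s_1$. *)

theory Defs
  imports "HOL-Computational_Algebra.Factorial_Ring" "Jordan_Normal_Form.Matrix"
begin

definition is_ideal :: "'a::comm_ring_1 set \<Rightarrow> bool" where
  "is_ideal I \<longleftrightarrow> 0 \<in> I \<and> (\<forall>a\<in>I. \<forall>b\<in>I. a + b \<in> I) \<and> (\<forall>r. \<forall>a\<in>I. r * a \<in> I)"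

definition ideal_gen :: "'a::comm_ring_1 set \<Rightarrow> 'a set" where
  "ideal_gen F = {x. \<exists>G c. finite G \<and> G \<subseteq> F \<and> x = (\<Sum>g\<in>G. c g * g)}"

definition noetherian :: "'a::comm_ring_1 itself \<Rightarrow> bool" where
  "noetherian _ \<longleftrightarrow> (\<forall>I::'a set. is_ideal I \<longrightarrow> (\<exists>F. finite F \<and> I = ideal_gen F))"

definition is_prime_ideal :: "'a::comm_ring_1 set \<Rightarrow> bool" where
  "is_prime_ideal P \<longleftrightarrow> is_ideal P \<and> (1::'a) \<notin> P \<and> (\<forall>a b. a * b \<in> P \<longrightarrow> a \<in> P \<or> b \<in> P)"

text \<open>A map R^k -> R^m is a matrix in carrier_mat m k. The sequence
  0 -> B0* -D4-> B1* -D3-> H+H* -D2-> B1 -D1-> B0 is acyclic iff it is a complex and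
  all homology except H_0 = coker D1 vanishes.\<close>

definition exact_at :: "'a::comm_ring_1 mat \<Rightarrow> 'a mat \<Rightarrow> bool" where
  "exact_at A B \<longleftrightarrow> (\<forall>v\<in>carrier_vec (dim_col B). B *\<^sub>v v = 0\<^sub>v (dim_row B) \<longrightarrow>
                       (\<exists>w\<in>carrier_vec (dim_col A). A *\<^sub>v w = v))"

definition acyclic4 :: "'a::comm_ring_1 mat \<Rightarrow> 'a mat \<Rightarrow> 'a mat \<Rightarrow> 'a mat \<Rightarrow> bool" where
  "acyclic4 D4 D3 D2 D1 \<longleftrightarrow>
     D3 * D4 = 0\<^sub>m (dim_row D3) (dim_col D4) \<and>
     D2 * D3 = 0\<^sub>m (dim_row D2) (dim_col D3) \<and>
     D1 * D2 = 0\<^sub>m (dim_row D1) (dim_col D2) \<and>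
     (\<forall>v\<in>carrier_vec (dim_col D4). D4 *\<^sub>v v = 0\<^sub>v (dim_row D4) \<longrightarrow> v = 0\<^sub>v (dim_col D4)) \<and>
     exact_at D4 D3 \<and> exact_at D3 D2 \<and> exact_at D2 D1"

text \<open>Gram matrix of the split form beta on H + H* (first n coordinates: basis of H,
  last n: dual basis of H*).  beta((f,f'),(g,g')) = f'(g) + g'(f).\<close>

definition beta_mat :: "nat \<Rightarrow> 'a::comm_ring_1 mat" where
  "beta_mat n = four_block_mat (0\<^sub>m n n) (1\<^sub>m n) (1\<^sub>m n) (0\<^sub>m n n)"

text \<open>An element of the exterior algebra of R^n is its coefficient function on the
  standard basis e_S (S a subset of {0..<n}, e_S = wedge of e_i, i in S, increasing).\<close>

definition ext_alg :: "nat \<Rightarrow> (nat set \<Rightarrow> 'a::zero) set" where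
  "ext_alg n = {\<omega>. \<forall>S. \<not> S \<subseteq> {..<n} \<longrightarrow> \<omega> S = 0}"

definition ext_odd :: "nat \<Rightarrow> (nat set \<Rightarrow> 'a::zero) set" where
  "ext_odd n = {\<omega>. \<forall>S. (\<not> S \<subseteq> {..<n} \<or> even (card S)) \<longrightarrow> \<omega> S = 0}"

definition sgn_pos :: "nat \<Rightarrow> nat set \<Rightarrow> 'a::comm_ring_1" where
  "sgn_pos i S = (-1) ^ card {j\<in>S. j < i}"

text \<open>(f,f') . w = f wedge w + iota_{f'} w, where x = (f,f') in R^{2n}.  On basis elements:
  e_i wedge e_S = sgn_pos i S e_{S+i} (i not in S), iota_{e_i*} e_S = sgn_pos i S e_{S-i} (i in S).\<close>

definition cliff :: "nat \<Rightarrow> 'a::comm_ring_1 vec \<Rightarrow> (nat set \<Rightarrow> 'a) \<Rightarrow> (nat set \<Rightarrow> 'a)" where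
  "cliff n x \<omega> = (\<lambda>T. if T \<subseteq> {..<n} then
       (\<Sum>i\<in>T. x $ i * sgn_pos i (T - {i}) * \<omega> (T - {i}))
     + (\<Sum>i\<in>{..<n} - T. x $ (n + i) * sgn_pos i T * \<omega> (insert i T))
     else 0)"

definition A_d3 :: "nat \<Rightarrow> nat \<Rightarrow> 'a::comm_ring_1 mat \<Rightarrow> 'a vec \<Rightarrow> 'a mat" where
  "A_d3 p q D4 u = mat (p + q) (q - 2 + 1) (\<lambda>(i, j). if j < q - 2 then D4 $$ (i, j) else u $ i)"

definition A_d2 :: "nat \<Rightarrow> nat \<Rightarrow> nat \<Rightarrow> 'a::comm_ring_1 mat \<Rightarrow> 'a mat" where
  "A_d2 n p q D3 = mat n (p + q) (\<lambda>(i, j). D3 $$ (n + i, j))"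

definition A_d1 :: "nat \<Rightarrow> (nat set \<Rightarrow> 'a::comm_ring_1) \<Rightarrow> 'a mat" where
  "A_d1 n s = mat 1 n (\<lambda>(_, j). s {j})"

definition deg1 :: "nat \<Rightarrow> (nat set \<Rightarrow> 'a::comm_ring_1) \<Rightarrow> 'a vec" where
  "deg1 n s = vec n (\<lambda>i. s {i})"

end

theory Submission
  imports Defs
begin

text \<open>Only \<open>\<delta>\<^sub>3 u = (s\<^sub>1, 0)\<close> is used, not the spinor property of \<open>s\<close>.
  The \<open>H\<^sup>*\<close>-components of \<open>\<delta>\<^sub>3 \<delta>\<^sub>4\<close> and of \<open>\<delta>\<^sub>3 u\<close> vanish, hence \<open>d\<^sub>2 d\<^sub>3 = 0\<close>.
  For every \<open>y\<close>, \<open>d\<^sub>1 d\<^sub>2 y = \<beta>(\<delta>\<^sub>3 y, (s\<^sub>1, 0)) = \<beta>(\<delta>\<^sub>3 y, \<delta>\<^sub>3 u)\<close>, which vanishes because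
  \<open>\<delta>\<^sub>2 = \<delta>\<^sub>3\<^sup>*\<close> and \<open>\<delta>\<^sub>2 \<delta>\<^sub>3 = 0\<close> make the image of \<open>\<delta>\<^sub>3\<close> isotropic for \<open>\<beta>\<close>.\<close>

lemma transpose_mult_mult_vec_eq_zero:
  assumes M: "M \<in> carrier_mat k m" and B: "B \<in> carrier_mat k k"
    and MBM: "transpose_mat M * B * M = 0\<^sub>m m m" and u: "u \<in> carrier_vec m"
  shows "transpose_mat M *\<^sub>v (B *\<^sub>v (M *\<^sub>v u)) = 0\<^sub>v m"
proof -
  have MT: "transpose_mat M \<in> carrier_mat m k"
    using M by simp
  have "transpose_mat M *\<^sub>v (B *\<^sub>v (M *\<^sub>v u)) = (transpose_mat M * B * M) *\<^sub>v u"
    using assoc_mult_mat_vec[OF mult_carrier_mat[OF MT B] M u]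
      assoc_mult_mat_vec[OF MT B mult_mat_vec_carrier[OF M u]] by simp
  also have "\<dots> = 0\<^sub>v m"
    using u by (auto simp: MBM scalar_prod_def)
  finally show ?thesis .
qed

lemma beta_mat_carrier: "beta_mat n \<in> carrier_mat (2 * n) (2 * n)"
  unfolding beta_mat_def mult_2 by (rule four_block_carrier_mat) auto

lemma beta_mat_mult_append:
  assumes "v \<in> carrier_vec n" "w \<in> carrier_vec n"
  shows "beta_mat n *\<^sub>v (v @\<^sub>v w) = w @\<^sub>v v"
  using assms unfolding beta_mat_def
  by (subst four_block_mat_mult_vec[OF zero_carrier_mat one_carrier_mat one_carrier_mat zero_carrier_mat]) auto

lemma A_d2_mult_index:
  assumes "D3 \<in> carrier_mat (2 * n) (p + q)" "B \<in> carrier_mat (p + q) k" "i < n" "j < k"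
  shows "(A_d2 n p q D3 * B) $$ (i, j) = (D3 * B) $$ (n + i, j)"
  using assms by (simp add: A_d2_def scalar_prod_def)

lemma mult_A_d3_index:
  assumes "M \<in> carrier_mat m (p + q)" "D4 \<in> carrier_mat (p + q) (q - 2)" "u \<in> carrier_vec (p + q)"
    "i < m" "j < q - 2 + 1"
  shows "(M * A_d3 p q D4 u) $$ (i, j) = (if j < q - 2 then (M * D4) $$ (i, j) else (M *\<^sub>v u) $ i)"
  using assms by (simp add: A_d3_def scalar_prod_def)

lemma A_d1_mult_index:
  assumes "M \<in> carrier_mat n k" "j < k"
  shows "(A_d1 n s * M) $$ (0, j) = (\<Sum>i<n. s {i} * M $$ (i, j))"
  using assms by (simp add: A_d1_def scalar_prod_def lessThan_atLeast0)

lemma scalar_prod_zero_append: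
  assumes "x \<in> carrier_vec (n + k)" "w \<in> carrier_vec k"
  shows "x \<bullet> (0\<^sub>v n @\<^sub>v w) = vec_last x k \<bullet> w"
proof -
  have "x \<bullet> (0\<^sub>v n @\<^sub>v w) = (vec_first x n @\<^sub>v vec_last x k) \<bullet> (0\<^sub>v n @\<^sub>v w)"
    using vec_first_last_append[OF assms(1)] by simp
  also have "\<dots> = vec_last x k \<bullet> w"
    using assms by (subst scalar_prod_append[of _ n _ k]) auto
  finally show ?thesis .
qed

lemma transpose_mult_zero_append_index:
  assumes "M \<in> carrier_mat (n + k) m" "w \<in> carrier_vec k" "j < m"
  shows "(transpose_mat M *\<^sub>v (0\<^sub>v n @\<^sub>v w)) $ j = (\<Sum>i<k. M $$ (n + i, j) * w $ i)"
proof -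
  have "(transpose_mat M *\<^sub>v (0\<^sub>v n @\<^sub>v w)) $ j = col M j \<bullet> (0\<^sub>v n @\<^sub>v w)"
    using assms by simp
  also have "\<dots> = vec_last (col M j) k \<bullet> w"
    using assms by (intro scalar_prod_zero_append) auto
  also have "\<dots> = (\<Sum>i<k. M $$ (n + i, j) * w $ i)"
    using assms by (simp add: scalar_prod_def lessThan_atLeast0 vec_last_def)
  finally show ?thesis .
qed

lemma A_d2_mult_A_d3_eq_zero:
  assumes D3: "D3 \<in> carrier_mat (2 * n) (p + q)" and D4: "D4 \<in> carrier_mat (p + q) (q - 2)"
    and D3D4: "D3 * D4 = 0\<^sub>m (2 * n) (q - 2)"
    and u: "u \<in> carrier_vec (p + q)" and v: "v \<in> carrier_vec n"
    and D3u: "D3 *\<^sub>v u = v @\<^sub>v 0\<^sub>v n"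
  shows "A_d2 n p q D3 * A_d3 p q D4 u = 0\<^sub>m n (q - 2 + 1)"
proof (rule eq_matI)
  fix i j assume "i < dim_row (0\<^sub>m n (q - 2 + 1) :: 'a mat)" "j < dim_col (0\<^sub>m n (q - 2 + 1) :: 'a mat)"
  then have i: "i < n" and j: "j < q - 2 + 1" by auto
  have "(A_d2 n p q D3 * A_d3 p q D4 u) $$ (i, j) = (D3 * A_d3 p q D4 u) $$ (n + i, j)"
    by (rule A_d2_mult_index[OF D3 _ i j]) (simp add: A_d3_def)
  also have "\<dots> = (if j < q - 2 then (D3 * D4) $$ (n + i, j) else (D3 *\<^sub>v u) $ (n + i))"
    using D3 D4 u i j by (intro mult_A_d3_index) auto
  also have "\<dots> = 0"
    using D3D4 D3u v i by auto
  finally show "(A_d2 n p q D3 * A_d3 p q D4 u) $$ (i, j) = 0\<^sub>m n (q - 2 + 1) $$ (i, j)"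
    using i j by simp
qed (auto simp: A_d2_def A_d3_def)

lemma A_d1_mult_A_d2_eq_zero:
  assumes D3: "D3 \<in> carrier_mat (2 * n) (p + q)"
    and isotropic: "transpose_mat D3 *\<^sub>v (0\<^sub>v n @\<^sub>v deg1 n s) = 0\<^sub>v (p + q)"
  shows "A_d1 n s * A_d2 n p q D3 = 0\<^sub>m 1 (p + q)"
proof (rule eq_matI)
  fix i j assume "i < dim_row (0\<^sub>m 1 (p + q) :: 'a mat)" "j < dim_col (0\<^sub>m 1 (p + q) :: 'a mat)"
  then have i: "i = 0" and j: "j < p + q" by auto
  have "(A_d1 n s * A_d2 n p q D3) $$ (0, j) = (\<Sum>k<n. s {k} * D3 $$ (n + k, j))"
    using j by (subst A_d1_mult_index[of _ _ "p + q"]) (auto simp: A_d2_def)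
  also have "\<dots> = (transpose_mat D3 *\<^sub>v (0\<^sub>v n @\<^sub>v deg1 n s)) $ j"
    using D3 j by (subst transpose_mult_zero_append_index[of _ n n]) (auto simp: mult_2 deg1_def mult.commute)
  also have "\<dots> = 0"
    using isotropic j by simp
  finally show "(A_d1 n s * A_d2 n p q D3) $$ (i, j) = 0\<^sub>m 1 (p + q) $$ (i, j)"
    using i j by simp
qed (auto simp: A_d1_def A_d2_def)

theorem mainTheorem8:
  fixes p q n :: nat
    and D4 D3 D2 D1 :: "'a::{factorial_semiring, idom} mat"
    and s :: "nat set \<Rightarrow> 'a"
    and u :: "'a vec"
  assumes noeth: "noetherian TYPE('a)"
    and half: "is_unit (2::'a)"
    and p: "p \<ge> 1" and q: "q \<ge> 3" and n: "n = p + 2"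
    and D4: "D4 \<in> carrier_mat (p + q) (q - 2)"
    and D3: "D3 \<in> carrier_mat (2 * n) (p + q)"
    and D2: "D2 \<in> carrier_mat (p + q) (2 * n)"
    and D1: "D1 \<in> carrier_mat (q - 2) (p + q)"
    and dual2: "D2 = transpose_mat D3 * beta_mat n"
    and dual1: "D1 = transpose_mat D4"
    and acyc: "acyclic4 D4 D3 D2 D1"
    and s_odd: "s \<in> ext_odd n"
    and spinor: "\<And>P. is_prime_ideal P \<Longrightarrow>
        (\<forall>b\<in>carrier_vec (q - 2). \<exists>t y. t \<notin> P \<and> y \<in> carrier_vec (p + q) \<and> D1 *\<^sub>v y = t \<cdot>\<^sub>v b) \<Longrightarrow>
        (\<forall>y\<in>carrier_vec (p + q). \<exists>w. w \<notin> P \<and> (\<forall>T. w * cliff n (D3 *\<^sub>v y) s T = 0)) \<and>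
        (\<forall>\<omega> t. \<omega> \<in> ext_alg n \<and> t \<notin> P \<and>
            (\<forall>y\<in>carrier_vec (p + q). \<exists>w. w \<notin> P \<and> (\<forall>T. w * cliff n (D3 *\<^sub>v y) \<omega> T = 0))
          \<longrightarrow> (\<exists>r v w. v \<notin> P \<and> w \<notin> P \<and> (\<forall>T. w * (v * \<omega> T - t * r * s T) = 0)))"
    and u: "u \<in> carrier_vec (p + q)"
    and u_lift: "D3 *\<^sub>v u = deg1 n s @\<^sub>v 0\<^sub>v n"
  shows "A_d2 n p q D3 * A_d3 p q D4 u = 0\<^sub>m n (q - 2 + 1)
       \<and> A_d1 n s * A_d2 n p q D3 = 0\<^sub>m 1 (p + q)"
proof -
  have D2D3: "D2 * D3 = 0\<^sub>m (p + q) (p + q)" and D3D4: "D3 * D4 = 0\<^sub>m (2 * n) (q - 2)"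
    using acyc D2 D3 D4 unfolding acyclic4_def by auto
  have s1: "deg1 n s \<in> carrier_vec n"
    by (simp add: deg1_def)
  have "transpose_mat D3 *\<^sub>v (0\<^sub>v n @\<^sub>v deg1 n s) = transpose_mat D3 *\<^sub>v (beta_mat n *\<^sub>v (D3 *\<^sub>v u))"
    using s1 by (simp add: u_lift beta_mat_mult_append)
  also have "\<dots> = 0\<^sub>v (p + q)"
    using D3 beta_mat_carrier D2D3 u unfolding dual2 by (rule transpose_mult_mult_vec_eq_zero)
  finally have isotropic: "transpose_mat D3 *\<^sub>v (0\<^sub>v n @\<^sub>v deg1 n s) = 0\<^sub>v (p + q)" .
  show ?thesis
    using A_d2_mult_A_d3_eq_zero[OF D3 D4 D3D4 u s1 u_lift]
      A_d1_mult_A_d2_eq_zero[OF D3 isotropic] by simp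
qed

end
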